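(* Let $(\delta_n)$ be a positive sequence with $\log(\delta_n)/\log n\to0$, and let $\beta=\beta_n\ge0$ with $n\log(n)\beta_n\to0$. Set $a_n=\delta_n\sqrt{2\log n}$ and $b_n=\sqrt{2\log n}-\frac{\log\log n+2\log\delta_n+\log(4\pi)}{2\sqrt{2\log n}}$. Fix an integer $1\le k<\infty$ and $(x_1,\dots,x_k)\in\mathbb{R}^k$, and let $$\tilde R^n_k(x_1,\dots,x_k)=\mathbb{E}_{P_{n-k,\beta}}\Big[\exp\Big(\beta\sum_{i=1}^k\sum_{j=1}^{n-k}\log\Big|1+\frac{x_i}{a_nb_n}-\frac{\lambda_j}{b_n}\Big|\Big)\Big].$$ Then $\tilde R^n_k(x_1,\dots,x_k)\to1$ as $n\to\infty$.
   Context: $P_{m,\beta}$ denotes the law on $\mathbb{R}^m$ with density $\frac{1}{Z_{m,\beta}}\exp(-\frac12\sum_{i=1}^m\lambda_i^2)\prod_{1\le i<j\le m}|\lambda_i-\lambda_j|^\beta$ with respect to Lebesgue measure, $Z_{m,\beta}$ being the normalizing constant; under it $(\lambda_1,\dots,\lambda_{m})$ is the coordinate vector. *)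

theory Defs
  imports "HOL-Analysis.Analysis"
begin

text \<open>The product Lebesgue measure on R^m, points represented as nat => real
  (coordinates lambda 0, ..., lambda (m-1)).\<close>
definition RmMeasure :: "nat \<Rightarrow> (nat \<Rightarrow> real) measure" where
  "RmMeasure m = PiM {..<m} (\<lambda>_. lborel)"

text \<open>|t|^beta, with the convention |0|^0 = 1.\<close>
definition abspow :: "real \<Rightarrow> real \<Rightarrow> real" where
  "abspow t b = (if b = 0 then 1 else \<bar>t\<bar> powr b)"

definition beta_dens :: "nat \<Rightarrow> real \<Rightarrow> (nat \<Rightarrow> real) \<Rightarrow> real" where
  "beta_dens m b l = exp (- (1/2) * (\<Sum>i<m. (l i)\<^sup>2)) *
     (\<Prod>i<m. \<Prod>j\<in>{i<..<m}. abspow (l i - l j) b)"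

definition beta_Z :: "nat \<Rightarrow> real \<Rightarrow> real" where
  "beta_Z m b = (\<integral>l. beta_dens m b l \<partial>RmMeasure m)"

definition beta_E :: "nat \<Rightarrow> real \<Rightarrow> ((nat \<Rightarrow> real) \<Rightarrow> real) \<Rightarrow> real" where
  "beta_E m b f = (\<integral>l. f l * beta_dens m b l \<partial>RmMeasure m) / beta_Z m b"

end

theory Submission
  imports Defs "HOL-Probability.Distributions" "HOL-Real_Asymp.Real_Asymp"
begin

(* Write s = beta_n and m = n - k. Since s k m <= k n beta_n -> 0 while every logarithm in
   the exponent is O(log n), crude bounds suffice.
   Upper bound: Jensen's inequality and (1 + y) powr p <= 1 + p (1 + y)^2 bound the integrand
   by M powr (s k m) * (1 + s k sum_j (1 + |lambda_j|)^2), with M = O(n), and the second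
   moments of P_{m,s} are bounded uniformly.
   Lower bound: with r = n^-2 the integrand is at least (r / b_n) powr (s k m) unless some
   lambda_j lies within r of some b_n (1 + x_i / (a_n b_n)), an event of probability
   O(k m r) = O(k / n).
   The moment and anticoncentration bounds come from the conditional density
   exp (-y^2/2) * prod_i |y - lambda_i|^s of one coordinate: on a window of length 2 at least
   half of the points are well separated from the other particles, and there the density is
   comparable to its value anywhere else up to exp (9/2) * (17 m) powr (s m).
   Finally b_n ~ sqrt (2 log n) and a_n b_n >= 1/n, so both bounds tend to 1. *)

section \<open>Powers of distances\<close>

lemma abspow_nonneg: "0 \<le> abspow t s"
  by (simp add: abspow_def)

lemma abspow_pos: "0 < t \<Longrightarrow> abspow t s = t powr s"
  by (simp add: abspow_def)

lemma abspow_minus_commute: "abspow (x - y) s = abspow (y - x) s"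
  by (simp add: abspow_def abs_minus_commute)

lemma abspow_measurable[measurable]: "(\<lambda>t. abspow t s) \<in> borel_measurable borel"
  unfolding abspow_def by (cases "s = 0") auto

lemma abspow_le_powr: "0 \<le> s \<Longrightarrow> \<bar>t\<bar> \<le> c \<Longrightarrow> 0 < c \<Longrightarrow> abspow t s \<le> c powr s"
  by (auto simp: abspow_def intro: powr_mono2)

lemma powr_le_abspow: "0 \<le> s \<Longrightarrow> 0 < c \<Longrightarrow> c \<le> \<bar>t\<bar> \<Longrightarrow> c powr s \<le> abspow t s"
  by (auto simp: abspow_def intro: powr_mono2)

lemma abspow_le_mult:
  assumes "0 \<le> s" "\<bar>t\<bar> \<le> K * \<bar>t'\<bar>" "1 \<le> K"
  shows "abspow t s \<le> K powr s * abspow t' s"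
proof (cases "s = 0")
  case False
  have "\<bar>t\<bar> powr s \<le> (K * \<bar>t'\<bar>) powr s" using assms by (intro powr_mono2) auto
  also have "\<dots> = K powr s * \<bar>t'\<bar> powr s" using assms by (simp add: powr_mult)
  finally show ?thesis using False by (simp add: abspow_def)
qed (use assms in \<open>simp add: abspow_def\<close>)

lemma prod_abspow_le_mult:
  assumes "0 \<le> s" "finite A" "card A \<le> m" "1 \<le> K" "K \<le> K'"
    and "\<And>i. i \<in> A \<Longrightarrow> \<bar>t i\<bar> \<le> K * \<bar>t' i\<bar>"
  shows "(\<Prod>i\<in>A. abspow (t i) s) \<le> K' powr (s * m) * (\<Prod>i\<in>A. abspow (t' i) s)"
proof -
  have "(\<Prod>i\<in>A. abspow (t i) s) \<le> (\<Prod>i\<in>A. K powr s * abspow (t' i) s)"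
    using assms by (intro prod_mono conjI abspow_nonneg abspow_le_mult) auto
  also have "\<dots> = K powr (s * card A) * (\<Prod>i\<in>A. abspow (t' i) s)"
    using assms by (simp add: prod.distrib powr_power mult.commute)
  also have "K powr (s * card A) \<le> K' powr (s * m)"
  proof -
    have "K powr (s * card A) \<le> K powr (s * m)"
      using assms by (intro powr_mono mult_left_mono) auto
    also have "\<dots> \<le> K' powr (s * m)" using assms by (intro powr_mono2) auto
    finally show ?thesis .
  qed
  finally show ?thesis by (auto intro: mult_right_mono prod_nonneg abspow_nonneg)
qed


section \<open>Gaussian integrals\<close>

lemma integrable_gauss_mult_power:
  "integrable lborel (\<lambda>y::real. exp (-(y^2)/2) * (1 + \<bar>y\<bar>) ^ n)"
proof -
  define C where "C = (2::real)^n * sqrt (2*pi)"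
  have "integrable lborel (\<lambda>y. C * (std_normal_density y * \<bar>y\<bar>^0) + C * (std_normal_density y * \<bar>y\<bar>^n))"
    using integrable_std_normal_moment_abs[of 0] integrable_std_normal_moment_abs[of n] by auto
  then show ?thesis
  proof (rule Bochner_Integration.integrable_bound)
    show "AE y in lborel. norm (exp (-(y^2)/2) * (1 + \<bar>y\<bar>) ^ n) \<le>
        norm (C * (std_normal_density y * \<bar>y\<bar>^0) + C * (std_normal_density y * \<bar>y\<bar>^n))"
    proof (intro AE_I2)
      fix y :: real
      have "(1 + \<bar>y\<bar>) ^ n \<le> (2 * max 1 \<bar>y\<bar>) ^ n" by (intro power_mono) auto
      also have "\<dots> \<le> 2^n * (1 + \<bar>y\<bar>^n)"
        by (auto simp: power_mult_distrib max_def)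
      finally have "exp (-(y^2)/2) * (1 + \<bar>y\<bar>) ^ n \<le> exp (-(y^2)/2) * (2^n * (1 + \<bar>y\<bar>^n))"
        by (intro mult_left_mono) auto
      also have "\<dots> = C * (std_normal_density y * \<bar>y\<bar>^0) + C * (std_normal_density y * \<bar>y\<bar>^n)"
        unfolding C_def normal_density_def by (simp add: field_simps)
      finally show "norm (exp (-(y^2)/2) * (1 + \<bar>y\<bar>) ^ n) \<le>
          norm (C * (std_normal_density y * \<bar>y\<bar>^0) + C * (std_normal_density y * \<bar>y\<bar>^n))"
        by simp
    qed
  qed measurable
qed

lemma integrable_gauss_mult_powr:
  assumes "0 \<le> c"
  shows "integrable lborel (\<lambda>y::real. exp (-(y^2)/2) * (1 + \<bar>y\<bar>) powr c)"
  using integrable_gauss_mult_power[of "nat \<lceil>c\<rceil>"]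
proof (rule Bochner_Integration.integrable_bound)
  have "(1 + \<bar>y\<bar>) powr c \<le> (1 + \<bar>y\<bar>) ^ nat \<lceil>c\<rceil>" for y :: real
  proof -
    have "(1 + \<bar>y\<bar>) powr c \<le> (1 + \<bar>y\<bar>) powr real (nat \<lceil>c\<rceil>)"
      using assms by (intro powr_mono) auto
    then show ?thesis by (simp add: powr_realpow add_pos_nonneg)
  qed
  then show "AE y in lborel. norm (exp (-(y^2)/2) * (1 + \<bar>y\<bar>) powr c)
      \<le> norm (exp (-(y^2)/2) * (1 + \<bar>y\<bar>) ^ nat \<lceil>c\<rceil>)"
    by (intro AE_I2) (auto intro!: mult_left_mono)
qed measurable

section \<open>The conditional weight of one particle\<close>

text \<open>The conditional density, up to normalisation, of one coordinate of the
  beta-ensemble given that the coordinates indexed by A take the values a i.\<close>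
definition particle_weight :: "real \<Rightarrow> (nat \<Rightarrow> real) \<Rightarrow> nat set \<Rightarrow> real \<Rightarrow> real" where
  "particle_weight s a A y = exp (-(y^2)/2) * (\<Prod>i\<in>A. abspow (y - a i) s)"

lemma particle_weight_nonneg: "0 \<le> particle_weight s a A y"
  unfolding particle_weight_def by (intro mult_nonneg_nonneg prod_nonneg) (auto simp: abspow_nonneg)

lemma particle_weight_measurable[measurable]: "particle_weight s a A \<in> borel_measurable borel"
  unfolding particle_weight_def by measurable

lemma particle_weight_le:
  assumes "0 \<le> s" "finite A"
  shows "particle_weight s a A y
    \<le> exp (-(y^2)/2) * (1 + \<bar>y\<bar>) powr (s * card A) * (\<Prod>i\<in>A. (1 + \<bar>a i\<bar>) powr s)"
proof -
  have "(\<Prod>i\<in>A. abspow (y - a i) s) \<le> (\<Prod>i\<in>A. (1 + \<bar>y\<bar>) powr s * (1 + \<bar>a i\<bar>) powr s)"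
  proof (intro prod_mono conjI abspow_nonneg)
    fix i
    have "\<bar>y - a i\<bar> \<le> (1 + \<bar>y\<bar>) * (1 + \<bar>a i\<bar>)"
      by (simp add: algebra_simps) (smt (verit) mult_nonneg_nonneg abs_ge_zero)
    then have "abspow (y - a i) s \<le> ((1 + \<bar>y\<bar>) * (1 + \<bar>a i\<bar>)) powr s"
      using assms by (intro abspow_le_powr) (auto intro: add_pos_nonneg mult_pos_pos)
    then show "abspow (y - a i) s \<le> (1 + \<bar>y\<bar>) powr s * (1 + \<bar>a i\<bar>) powr s"
      by (simp add: powr_mult)
  qed
  also have "\<dots> = (1 + \<bar>y\<bar>) powr (s * card A) * (\<Prod>i\<in>A. (1 + \<bar>a i\<bar>) powr s)"
    by (simp add: prod.distrib powr_power add_pos_nonneg mult.commute)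
  finally show ?thesis unfolding particle_weight_def
    by (simp add: mult.assoc mult_left_mono)
qed

lemma integrable_power_mult_particle_weight:
  assumes "0 \<le> s" "finite A"
  shows "integrable lborel (\<lambda>y. (1 + \<bar>y\<bar>)^n * particle_weight s a A y)"
proof -
  define P where "P = (\<Prod>i\<in>A. (1 + \<bar>a i\<bar>) powr s)"
  define q where "q = s * card A + n"
  have "0 \<le> P" unfolding P_def by (intro prod_nonneg) auto
  have "integrable lborel (\<lambda>y. P * (exp (-(y^2)/2) * (1 + \<bar>y\<bar>) powr q))"
    using integrable_gauss_mult_powr[of q] assms by (simp add: q_def)
  then show ?thesis
  proof (rule Bochner_Integration.integrable_bound)
    show "AE y in lborel. norm ((1 + \<bar>y\<bar>)^n * particle_weight s a A y)
        \<le> norm (P * (exp (-(y^2)/2) * (1 + \<bar>y\<bar>) powr q))"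
    proof (intro AE_I2)
      fix y :: real
      have "(1 + \<bar>y\<bar>)^n * particle_weight s a A y
          \<le> (1 + \<bar>y\<bar>)^n * (exp (-(y^2)/2) * (1 + \<bar>y\<bar>) powr (s * card A) * P)"
        using particle_weight_le[OF assms, of a y] unfolding P_def by (intro mult_left_mono) auto
      also have "\<dots> = P * (exp (-(y^2)/2) * (1 + \<bar>y\<bar>) powr q)"
        unfolding q_def by (simp add: powr_add powr_realpow add_pos_nonneg mult_ac)
      finally show "norm ((1 + \<bar>y\<bar>)^n * particle_weight s a A y)
          \<le> norm (P * (exp (-(y^2)/2) * (1 + \<bar>y\<bar>) powr q))"
        using particle_weight_nonneg[of s a A y] \<open>0 \<le> P\<close> by (simp add: abs_mult)
    qed
  qed measurable
qed

lemma integrable_particle_weight: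
  "0 \<le> s \<Longrightarrow> finite A \<Longrightarrow> integrable lborel (particle_weight s a A)"
  using integrable_power_mult_particle_weight[of s A 0] by simp

lemma measure_separated_points_ge:
  fixes a :: "nat \<Rightarrow> real" and c \<eta> :: real
  assumes "finite A" "0 < \<eta>"
  shows "2 - 2 * \<eta> * card A \<le> measure lborel {y \<in> {c..c+2}. \<forall>i\<in>A. \<eta> \<le> \<bar>y - a i\<bar>}"
proof -
  define G where "G = {y \<in> {c..c+2}. \<forall>i\<in>A. \<eta> \<le> \<bar>y - a i\<bar>}"
  define U where "U i = {y \<in> {c..c+2}. \<bar>y - a i\<bar> < \<eta>}" for i
  have G_meas: "G \<in> sets lborel" unfolding G_def by measurable
  have U_meas: "U i \<in> sets lborel" for i unfolding U_def by measurable
  have U_le: "measure lborel (U i) \<le> 2 * \<eta>" for i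
  proof -
    have "measure lborel (U i) \<le> measure lborel {a i - \<eta> <..< a i + \<eta>}"
      using U_meas assms by (intro measure_mono_fmeasurable) (auto simp: U_def fmeasurable_def)
    then show ?thesis using assms by simp
  qed
  have "2 = measure lborel {c..c+2}" by simp
  also have "{c..c+2} = G \<union> (\<Union>i\<in>A. U i)" unfolding G_def U_def by auto
  also have "measure lborel \<dots> \<le> measure lborel G + measure lborel (\<Union>i\<in>A. U i)"
    using G_meas U_meas assms by (intro measure_Un_le) auto
  also have "measure lborel (\<Union>i\<in>A. U i) \<le> (\<Sum>i\<in>A. measure lborel (U i))"
    using U_meas assms by (intro measure_UNION_le) auto
  also have "\<dots> \<le> (\<Sum>i\<in>A. 2 * \<eta>)" using U_le by (intro sum_mono)
  also have "\<dots> = 2 * \<eta> * card A" by simp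
  finally show ?thesis unfolding G_def by linarith
qed

lemma le_mult_integral_if_le_on_set:
  fixes g :: "real \<Rightarrow> real"
  assumes "G \<in> sets lborel" "1 \<le> measure lborel G" "emeasure lborel G < \<infinity>"
    and "integrable lborel g" "\<And>y. 0 \<le> g y" "0 \<le> K" "0 \<le> \<Phi>"
    and "\<And>y. y \<in> G \<Longrightarrow> \<Phi> \<le> K * g y"
  shows "\<Phi> \<le> K * (\<integral>y. g y \<partial>lborel)"
proof -
  have int: "integrable lborel (\<lambda>y. indicator G y * (K * g y))"
    using integrable_mult_indicator[OF assms(1) integrable_mult_right[OF assms(4)]] by simp
  have "\<Phi> \<le> \<Phi> * measure lborel G" using assms by (simp add: mult_le_cancel_left1)
  also have "\<dots> = (\<integral>y. indicator G y * \<Phi> \<partial>lborel)"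
    using assms by (simp add: integral_indicator)
  also have "\<dots> \<le> (\<integral>y. indicator G y * (K * g y) \<partial>lborel)"
    using assms int
    by (intro integral_mono integrable_mult_left integrable_real_indicator) (auto simp: indicator_def)
  also have "\<dots> \<le> (\<integral>y. K * g y \<partial>lborel)"
    using assms int by (intro integral_mono) (auto simp: indicator_def)
  finally show ?thesis by simp
qed

text \<open>At least half of the window [c, c + 2] is at distance at least 1 / (4 m) from all of
  the at most m points a i, so a pointwise bound there integrates to a bound by the integral.\<close>
lemma le_mult_integral_if_le_on_separated_points:
  fixes a :: "nat \<Rightarrow> real" and g :: "real \<Rightarrow> real" and m :: nat
  assumes "finite A" "card A \<le> m" "1 \<le> m"
    and "integrable lborel g" "\<And>y. 0 \<le> g y" "0 \<le> K" "0 \<le> \<Phi>"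
    and "\<And>y. c \<le> y \<Longrightarrow> y \<le> c + 2 \<Longrightarrow> (\<And>i. i \<in> A \<Longrightarrow> 1 / (4 * real m) \<le> \<bar>y - a i\<bar>)
      \<Longrightarrow> \<Phi> \<le> K * g y"
  shows "\<Phi> \<le> K * (\<integral>y. g y \<partial>lborel)"
proof -
  define G where "G = {y \<in> {c..c+2}. \<forall>i\<in>A. 1 / (4 * real m) \<le> \<bar>y - a i\<bar>}"
  have "2 - 2 * (1 / (4 * real m)) * card A \<le> measure lborel G"
    unfolding G_def using assms by (intro measure_separated_points_ge) auto
  moreover have "2 * (1 / (4 * real m)) * card A \<le> 1"
    using assms by (simp add: field_simps)
  ultimately have "1 \<le> measure lborel G" by linarith
  moreover have "emeasure lborel G < \<infinity>"
  proof -
    have "emeasure lborel G \<le> emeasure lborel {c..c+2}"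
      unfolding G_def by (intro emeasure_mono) auto
    also have "\<dots> < \<infinity>" by simp
    finally show ?thesis .
  qed
  ultimately show ?thesis
    using assms by (intro le_mult_integral_if_le_on_set[where G = G]) (auto simp: G_def)
qed

lemma window_toward_origin:
  fixes u y y' :: real
  assumes "\<bar>y - u\<bar> < 1" "c \<le> y'" "y' \<le> c + 2" "c = (if 0 \<le> u then u - 3 else u + 1)"
  shows "y'^2 \<le> y^2 + 9" and "\<bar>y - y'\<bar> \<le> 4"
proof -
  have "\<bar>y'\<bar> \<le> \<bar>y\<bar> \<or> \<bar>y'\<bar> \<le> \<bar>3\<bar>" using assms by (auto split: if_splits)
  then have "y'^2 \<le> y^2 \<or> y'^2 \<le> 3^2" by (simp only: abs_le_square_iff)
  moreover have "(3::real)^2 = 9" by simp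
  ultimately show "y'^2 \<le> y^2 + 9" using zero_le_power2[of y] by linarith
  show "\<bar>y - y'\<bar> \<le> 4" using assms by (auto split: if_splits)
qed

text \<open>Moving y to a separated point of a window shifted towards the origin costs at most
  exp (9/2) in the Gaussian factor and 17 m in each of the at most m distance factors.\<close>
lemma particle_weight_anticoncentration:
  fixes m :: nat
  assumes s: "0 \<le> s" and A: "finite A" "card A \<le> m" and m: "1 \<le> m" and r: "0 < r" "r \<le> 1"
  shows "(\<integral>y. indicator {u-r<..<u+r} y * particle_weight s a A y \<partial>lborel)
    \<le> 2 * r * exp (9/2) * (17 * real m) powr (s * m) * (\<integral>y. particle_weight s a A y \<partial>lborel)"
proof -
  define c where "c = (if 0 \<le> u then u - 3 else u + 1)"
  define Q where "Q = (17 * real m) powr (s * m)"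
  have "0 \<le> Q" by (simp add: Q_def)
  have weight_le: "particle_weight s a A y \<le> exp (9/2) * Q * particle_weight s a A y'"
    if y: "\<bar>y - u\<bar> < 1" and y': "c \<le> y'" "y' \<le> c + 2"
      and sep: "\<And>i. i \<in> A \<Longrightarrow> 1 / (4 * real m) \<le> \<bar>y' - a i\<bar>" for y y'
  proof -
    note window = window_toward_origin[OF y y' c_def]
    have "exp (-(y^2)/2) \<le> exp (9/2) * exp (-(y'^2)/2)"
      unfolding exp_add[symmetric] using window(1) by simp
    moreover have "(\<Prod>i\<in>A. abspow (y - a i) s) \<le> Q * (\<Prod>i\<in>A. abspow (y' - a i) s)"
      unfolding Q_def
    proof (rule prod_abspow_le_mult[OF s A, of "1 + 16 * real m"])
      fix i assume "i \<in> A"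
      then have "4 \<le> 16 * real m * \<bar>y' - a i\<bar>" using sep m by (simp add: field_simps)
      then show "\<bar>y - a i\<bar> \<le> (1 + 16 * real m) * \<bar>y' - a i\<bar>"
        using window(2) by (simp add: algebra_simps)
    qed (use m in auto)
    ultimately have "particle_weight s a A y
        \<le> (exp (9/2) * exp (-(y'^2)/2)) * (Q * (\<Prod>i\<in>A. abspow (y' - a i) s))"
      unfolding particle_weight_def by (intro mult_mono) (auto intro: prod_nonneg abspow_nonneg)
    then show ?thesis unfolding particle_weight_def by (simp add: mult_ac)
  qed
  show ?thesis unfolding Q_def[symmetric]
  proof (rule le_mult_integral_if_le_on_separated_points[OF A m integrable_particle_weight[OF s A(1)]])
    fix y' assume y': "c \<le> y'" "y' \<le> c + 2"
      and sep: "\<And>i. i \<in> A \<Longrightarrow> 1 / (4 * real m) \<le> \<bar>y' - a i\<bar>"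
    have "(\<integral>y. indicator {u-r<..<u+r} y * particle_weight s a A y \<partial>lborel)
        \<le> (\<integral>y. indicator {u-r<..<u+r} y * (exp (9/2) * Q * particle_weight s a A y') \<partial>lborel)"
    proof (rule integral_mono)
      show "integrable lborel (\<lambda>y. indicator {u-r<..<u+r} y * particle_weight s a A y)"
        using integrable_mult_indicator[OF _ integrable_particle_weight[OF s A(1)]] by simp
      show "integrable lborel
          (\<lambda>y. indicator {u-r<..<u+r} y * (exp (9/2) * Q * particle_weight s a A y'))"
        using r by (intro integrable_mult_left integrable_real_indicator) auto
      fix y show "indicator {u-r<..<u+r} y * particle_weight s a A y
          \<le> indicator {u-r<..<u+r} y * (exp (9/2) * Q * particle_weight s a A y')"
        using weight_le[OF _ y' sep, of y] r by (auto simp: indicator_def abs_less_iff)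
    qed
    also have "\<dots> = 2 * r * exp (9/2) * Q * particle_weight s a A y'"
      using r by simp
    finally show "(\<integral>y. indicator {u-r<..<u+r} y * particle_weight s a A y \<partial>lborel)
        \<le> 2 * r * exp (9/2) * Q * particle_weight s a A y'" .
  qed (use r in \<open>auto simp: Q_def particle_weight_nonneg intro!: integral_nonneg_AE\<close>)
qed

definition gauss_cubic_moment :: real where
  "gauss_cubic_moment = (\<integral>y. exp (-(y^2)/2) * (1 + \<bar>y\<bar>) ^ 3 \<partial>lborel)"

lemma gauss_cubic_moment_nonneg: "0 \<le> gauss_cubic_moment"
  unfolding gauss_cubic_moment_def by (intro integral_nonneg_AE AE_I2) auto

lemma particle_weight_second_moment:
  fixes m :: nat and s :: real
  assumes s: "0 \<le> s" and A: "finite A" "card A \<le> m" and m: "1 \<le> m" and sm: "s * m \<le> 1"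
  shows "(\<integral>y. (1 + \<bar>y\<bar>)^2 * particle_weight s a A y \<partial>lborel)
    \<le> gauss_cubic_moment * exp (1/2) * (17 * real m) powr (s * m)
        * (\<integral>y. particle_weight s a A y \<partial>lborel)"
proof -
  define Q where "Q = (17 * real m) powr (s * m)"
  define P where "P = (\<Prod>i\<in>A. (1 + \<bar>a i\<bar>) powr s)"
  have "0 \<le> P" unfolding P_def by (intro prod_nonneg) auto
  have moment_le: "(1 + \<bar>y\<bar>)^2 * particle_weight s a A y \<le> P * (exp (-(y^2)/2) * (1 + \<bar>y\<bar>) ^ 3)"
    for y
  proof -
    have "(1 + \<bar>y\<bar>) powr (s * card A) \<le> (1 + \<bar>y\<bar>) powr 1"
      using s A sm mult_left_mono[of "real (card A)" "real m" s] by (intro powr_mono) auto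
    then have "particle_weight s a A y \<le> exp (-(y^2)/2) * (1 + \<bar>y\<bar>) * P"
      using particle_weight_le[OF s A(1), of a y] \<open>0 \<le> P\<close> unfolding P_def
      by (elim order.trans) (intro mult_right_mono mult_left_mono, auto)
    then have "(1 + \<bar>y\<bar>)^2 * particle_weight s a A y \<le> (1 + \<bar>y\<bar>)^2 * (exp (-(y^2)/2) * (1 + \<bar>y\<bar>) * P)"
      by (intro mult_left_mono) auto
    then show ?thesis by (simp add: power2_eq_square power3_eq_cube mult_ac)
  qed
  have "(\<integral>y. (1 + \<bar>y\<bar>)^2 * particle_weight s a A y \<partial>lborel)
      \<le> (\<integral>y. P * (exp (-(y^2)/2) * (1 + \<bar>y\<bar>) ^ 3) \<partial>lborel)"
    using integrable_power_mult_particle_weight[OF s A(1)] integrable_gauss_mult_power moment_le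
    by (intro integral_mono) auto
  also have "\<dots> = gauss_cubic_moment * P" unfolding gauss_cubic_moment_def by simp
  finally have moment_le_P: "(\<integral>y. (1 + \<bar>y\<bar>)^2 * particle_weight s a A y \<partial>lborel)
      \<le> gauss_cubic_moment * P" .
  have "P \<le> exp (1/2) * Q * (\<integral>y. particle_weight s a A y \<partial>lborel)"
  proof (rule le_mult_integral_if_le_on_separated_points[where c = "-1", OF A m
        integrable_particle_weight[OF s A(1)] particle_weight_nonneg _ \<open>0 \<le> P\<close>])
    fix y' :: real assume y': "-1 \<le> y'" "y' \<le> -1 + 2"
      and sep: "\<And>i. i \<in> A \<Longrightarrow> 1 / (4 * real m) \<le> \<bar>y' - a i\<bar>"
    have "P = (\<Prod>i\<in>A. abspow (1 + \<bar>a i\<bar>) s)" unfolding P_def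
      by (intro prod.cong refl) (simp add: abspow_pos add_pos_nonneg)
    also have "\<dots> \<le> Q * (\<Prod>i\<in>A. abspow (y' - a i) s)"
      unfolding Q_def
    proof (rule prod_abspow_le_mult[OF s A, of "12 * real m"])
      fix i assume "i \<in> A"
      then have "3 \<le> 12 * real m * \<bar>y' - a i\<bar>" using sep m by (simp add: field_simps)
      moreover have "3 * \<bar>y' - a i\<bar> \<le> 12 * real m * \<bar>y' - a i\<bar>" using m by (intro mult_right_mono) auto
      moreover have "\<bar>a i\<bar> \<le> 1 + \<bar>y' - a i\<bar>" using y' by arith
      moreover have "\<bar>1 + \<bar>a i\<bar>\<bar> = 1 + \<bar>a i\<bar>" by simp
      ultimately show "\<bar>1 + \<bar>a i\<bar>\<bar> \<le> 12 * real m * \<bar>y' - a i\<bar>" by linarith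
    qed (use m in auto)
    also have "\<dots> \<le> Q * (exp (1/2) * particle_weight s a A y')"
    proof -
      have "y'^2 \<le> 1" using y' by (simp add: abs_square_le_1)
      then have "1 \<le> exp (1/2) * exp (-(y'^2)/2)" by (simp add: exp_add[symmetric])
      then have "(\<Prod>i\<in>A. abspow (y' - a i) s)
          \<le> (exp (1/2) * exp (-(y'^2)/2)) * (\<Prod>i\<in>A. abspow (y' - a i) s)"
        using mult_right_mono[OF _ prod_nonneg, of 1 _ A "\<lambda>i. abspow (y' - a i) s"]
        by (simp add: abspow_nonneg)
      then show ?thesis
        unfolding particle_weight_def Q_def by (intro mult_left_mono) (auto simp: mult_ac)
    qed
    finally show "P \<le> exp (1/2) * Q * particle_weight s a A y'" by (simp add: mult_ac)
  qed (simp add: Q_def)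
  then have "gauss_cubic_moment * P
      \<le> gauss_cubic_moment * (exp (1/2) * Q * (\<integral>y. particle_weight s a A y \<partial>lborel))"
    using gauss_cubic_moment_nonneg by (rule mult_left_mono)
  then show ?thesis using moment_le_P by (simp add: Q_def mult_ac)
qed

section \<open>Factorisation of the density\<close>

lemma beta_dens_nonneg: "0 \<le> beta_dens m s l"
  unfolding beta_dens_def by (intro mult_nonneg_nonneg prod_nonneg) (auto simp: abspow_nonneg)

lemma beta_dens_measurable[measurable]: "beta_dens m s \<in> borel_measurable (RmMeasure m)"
  unfolding beta_dens_def RmMeasure_def by measurable

definition ordered_pairs :: "nat \<Rightarrow> (nat \<times> nat) set" where
  "ordered_pairs m = Sigma {..<m} (\<lambda>i. {i<..<m})"

lemma finite_ordered_pairs[simp]: "finite (ordered_pairs m)"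
  unfolding ordered_pairs_def by auto

lemma beta_dens_ordered_pairs: "beta_dens m s l = exp (-(1/2) * (\<Sum>i<m. (l i)^2)) *
    (\<Prod>p\<in>ordered_pairs m. abspow (l (fst p) - l (snd p)) s)"
  unfolding beta_dens_def ordered_pairs_def by (simp add: prod.Sigma split_def)

definition beta_dens_without :: "nat \<Rightarrow> real \<Rightarrow> nat \<Rightarrow> (nat \<Rightarrow> real) \<Rightarrow> real" where
  "beta_dens_without m s j x = exp (-(1/2) * (\<Sum>i\<in>{..<m}-{j}. (x i)^2)) *
     (\<Prod>p\<in>{p\<in>ordered_pairs m. fst p \<noteq> j \<and> snd p \<noteq> j}. abspow (x (fst p) - x (snd p)) s)"

lemma beta_dens_without_nonneg: "0 \<le> beta_dens_without m s j x"
  unfolding beta_dens_without_def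
  by (intro mult_nonneg_nonneg prod_nonneg) (auto simp: abspow_nonneg)

lemma beta_dens_fun_upd:
  assumes "j < m"
  shows "beta_dens m s (x(j:=y)) = beta_dens_without m s j x * particle_weight s x ({..<m}-{j}) y"
proof -
  let ?l = "x(j:=y)"
  let ?F = "\<lambda>p. abspow (?l (fst p) - ?l (snd p)) s"
  define B where "B = {p::nat\<times>nat. fst p = j \<or> snd p = j}"
  have sum: "(\<Sum>i<m. (?l i)^2) = y^2 + (\<Sum>i\<in>{..<m}-{j}. (x i)^2)"
    using assms by (subst sum.remove[of _ j]) (auto intro!: sum.cong)
  have split: "(\<Prod>p\<in>ordered_pairs m. ?F p)
      = (\<Prod>p\<in>ordered_pairs m \<inter> B. ?F p) * (\<Prod>p\<in>ordered_pairs m - B. ?F p)"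
    by (rule prod.Int_Diff) simp
  have rest: "(\<Prod>p\<in>ordered_pairs m - B. ?F p)
      = (\<Prod>p\<in>{p\<in>ordered_pairs m. fst p \<noteq> j \<and> snd p \<noteq> j}. abspow (x (fst p) - x (snd p)) s)"
    unfolding B_def by (intro prod.cong) auto
  define \<phi> where "\<phi> i = (if i < j then (i, j) else (j, i))" for i
  have bij: "bij_betw \<phi> ({..<m}-{j}) (ordered_pairs m \<inter> B)"
    by (rule bij_betw_byWitness[where f'="\<lambda>p. if fst p = j then snd p else fst p"])
      (use assms in \<open>auto simp: \<phi>_def B_def ordered_pairs_def\<close>)
  have "(\<Prod>p\<in>ordered_pairs m \<inter> B. ?F p) = (\<Prod>i\<in>{..<m}-{j}. ?F (\<phi> i))"
    using prod.reindex_bij_betw[OF bij, of ?F] by simp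
  also have "\<dots> = (\<Prod>i\<in>{..<m}-{j}. abspow (y - x i) s)"
    unfolding \<phi>_def by (intro prod.cong refl) (auto simp: abspow_minus_commute)
  finally have jpart: "(\<Prod>p\<in>ordered_pairs m \<inter> B. ?F p) = (\<Prod>i\<in>{..<m}-{j}. abspow (y - x i) s)" .
  have "exp (-(1/2) * (y^2 + (\<Sum>i\<in>{..<m}-{j}. (x i)^2)))
      = exp (-(y^2)/2) * exp (-(1/2) * (\<Sum>i\<in>{..<m}-{j}. (x i)^2))"
    by (simp add: exp_add[symmetric] field_simps)
  then show ?thesis
    unfolding beta_dens_ordered_pairs beta_dens_without_def particle_weight_def sum split rest jpart
    by (simp add: mult_ac)
qed

lemma one_plus_sum_le_prod:
  fixes z :: "'a \<Rightarrow> real"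
  assumes "finite A" "\<And>i. i \<in> A \<Longrightarrow> 0 \<le> z i"
  shows "1 + (\<Sum>i\<in>A. z i) \<le> (\<Prod>i\<in>A. 1 + z i)"
  using assms
proof (induction A rule: finite_induct)
  case (insert a A)
  have "1 \<le> (\<Prod>i\<in>A. 1 + z i)" using insert by (intro prod_ge_1) auto
  then have "z a \<le> z a * (\<Prod>i\<in>A. 1 + z i)"
    using insert mult_left_mono[of 1 "\<Prod>i\<in>A. 1 + z i" "z a"] by simp
  then show ?case using insert by (simp add: algebra_simps)
qed simp

lemma abs_mult_beta_dens_le:
  assumes "0 \<le> s" "j < m" "\<And>y. \<bar>h y\<bar> \<le> (1 + \<bar>y\<bar>)^2"
  shows "\<bar>h (l j) * beta_dens m s l\<bar>
    \<le> (\<Prod>k<m. exp (-((l k)^2)/2) * (1 + \<bar>l k\<bar>) powr (s * card (ordered_pairs m) + 2))"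
proof -
  define W where "W = (\<Prod>k<m. 1 + \<bar>l k\<bar>)"
  define c where "c = s * card (ordered_pairs m)"
  have W_ge: "1 + (\<Sum>k<m. \<bar>l k\<bar>) \<le> W" unfolding W_def by (rule one_plus_sum_le_prod) auto
  moreover have "0 \<le> (\<Sum>k<m. \<bar>l k\<bar>)" by (intro sum_nonneg) auto
  ultimately have "1 \<le> W" by linarith
  have pair_le: "\<bar>l (fst p) - l (snd p)\<bar> \<le> W" if "p \<in> ordered_pairs m" for p
  proof -
    have "\<bar>l (fst p)\<bar> + \<bar>l (snd p)\<bar> = (\<Sum>k\<in>{fst p, snd p}. \<bar>l k\<bar>)"
      using that by (auto simp: ordered_pairs_def)
    also have "\<dots> \<le> (\<Sum>k<m. \<bar>l k\<bar>)" using that by (intro sum_mono2) (auto simp: ordered_pairs_def)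
    finally show ?thesis using W_ge by linarith
  qed
  have "(\<Prod>p\<in>ordered_pairs m. abspow (l (fst p) - l (snd p)) s) \<le> (\<Prod>p\<in>ordered_pairs m. W powr s)"
    using pair_le \<open>1 \<le> W\<close> assms by (intro prod_mono conjI abspow_nonneg abspow_le_powr) auto
  also have "\<dots> = W powr c" using \<open>1 \<le> W\<close> by (simp add: c_def powr_power mult.commute)
  finally have pairs_le: "(\<Prod>p\<in>ordered_pairs m. abspow (l (fst p) - l (snd p)) s) \<le> W powr c" .
  have "\<bar>l j\<bar> \<le> (\<Sum>k<m. \<bar>l k\<bar>)" using assms by (intro member_le_sum) auto
  then have "(1 + \<bar>l j\<bar>)^2 \<le> W^2" using W_ge by (intro power_mono) auto
  then have h_le: "\<bar>h (l j)\<bar> \<le> W^2" using assms(3)[of "l j"] by linarith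
  have "\<bar>h (l j) * beta_dens m s l\<bar> = \<bar>h (l j)\<bar> * beta_dens m s l"
    by (simp add: abs_mult beta_dens_nonneg)
  also have "\<dots> \<le> W^2 * (exp (-(1/2) * (\<Sum>k<m. (l k)^2)) * W powr c)"
    unfolding beta_dens_ordered_pairs using h_le pairs_le
    by (intro mult_mono mult_left_mono) (auto intro!: mult_nonneg_nonneg prod_nonneg abspow_nonneg)
  also have "\<dots> = exp (-(1/2) * (\<Sum>k<m. (l k)^2)) * W powr (c + 2)"
    using \<open>1 \<le> W\<close> by (simp add: powr_add powr_numeral)
  also have "\<dots> = (\<Prod>k<m. exp (-((l k)^2)/2) * (1 + \<bar>l k\<bar>) powr (c + 2))"
  proof -
    have "exp (-(1/2) * (\<Sum>k<m. (l k)^2)) = (\<Prod>k<m. exp (-((l k)^2)/2))"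
      by (simp add: exp_sum[symmetric] sum_negf sum_divide_distrib)
    moreover have "W powr (c + 2) = (\<Prod>k<m. (1 + \<bar>l k\<bar>) powr (c + 2))"
      unfolding W_def by (rule prod_powr_distrib)
    ultimately show ?thesis by (simp add: prod.distrib)
  qed
  finally show ?thesis unfolding c_def .
qed

lemma measurable_RmMeasure_component: "j < m \<Longrightarrow> (\<lambda>l. l j) \<in> measurable (RmMeasure m) borel"
  using measurable_component_singleton[of j "{..<m}" "\<lambda>_. lborel :: real measure"]
  by (simp add: RmMeasure_def)

lemma integrable_beta_dens_mult:
  assumes s: "0 \<le> s" and j: "j < m" and h: "h \<in> borel_measurable borel"
    and h_le: "\<And>y. \<bar>h y\<bar> \<le> (1 + \<bar>y\<bar>)^2"
  shows "integrable (RmMeasure m) (\<lambda>l. h (l j) * beta_dens m s l)"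
proof -
  interpret product_sigma_finite "\<lambda>_::nat. lborel :: real measure" by standard
  define c where "c = s * card (ordered_pairs m) + 2"
  have "integrable (Pi\<^sub>M {..<m} (\<lambda>_. lborel))
      (\<lambda>l. \<Prod>k\<in>{..<m}. exp (-((l k)^2)/2) * (1 + \<bar>l k\<bar>) powr c)"
    by (rule product_integrable_prod[where f="\<lambda>_ y. exp (-(y^2)/2) * (1 + \<bar>y\<bar>) powr c"])
      (use integrable_gauss_mult_powr[of c] s in \<open>auto simp: c_def\<close>)
  then show ?thesis unfolding RmMeasure_def[symmetric]
  proof (rule Bochner_Integration.integrable_bound)
    show "AE l in RmMeasure m. norm (h (l j) * beta_dens m s l)
        \<le> norm (\<Prod>k\<in>{..<m}. exp (-((l k)^2)/2) * (1 + \<bar>l k\<bar>) powr c)"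
      using abs_mult_beta_dens_le[OF s j h_le] unfolding c_def
      by (intro AE_I2) (simp add: abs_of_nonneg prod_nonneg)
  qed (use measurable_compose[OF measurable_RmMeasure_component[OF j] h] in measurable)
qed

lemma integrable_beta_dens: "0 \<le> s \<Longrightarrow> 1 \<le> m \<Longrightarrow> integrable (RmMeasure m) (beta_dens m s)"
  using integrable_beta_dens_mult[of s 0 m "\<lambda>_. 1"] by (simp add: one_le_power)

text \<open>Integrating out the coordinate j first turns a bound for the one-dimensional
  conditional weights into a bound for the full density.\<close>
lemma integral_beta_dens_mult_le:
  assumes s: "0 \<le> s" and j: "j < m" and h: "h \<in> borel_measurable borel"
    and h_le: "\<And>y. \<bar>h y\<bar> \<le> (1 + \<bar>y\<bar>)^2"
    and h_int: "\<And>a. integrable lborel (\<lambda>y. h y * particle_weight s a ({..<m}-{j}) y)"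
    and cond_le: "\<And>a. (\<integral>y. h y * particle_weight s a ({..<m}-{j}) y \<partial>lborel)
      \<le> K * (\<integral>y. particle_weight s a ({..<m}-{j}) y \<partial>lborel)"
  shows "(\<integral>l. h (l j) * beta_dens m s l \<partial>RmMeasure m) \<le> K * beta_Z m s"
proof -
  interpret product_sigma_finite "\<lambda>_::nat. lborel :: real measure" by standard
  define I where "I = {..<m} - {j}"
  define f where "f l = K * beta_dens m s l - h (l j) * beta_dens m s l" for l
  have int_dens: "integrable (RmMeasure m) (beta_dens m s)"
    using integrable_beta_dens[OF s] j by simp
  have int_h: "integrable (RmMeasure m) (\<lambda>l. h (l j) * beta_dens m s l)"
    by (rule integrable_beta_dens_mult[OF s j h h_le])
  have "(\<integral>l. f l \<partial>RmMeasure m) = (\<integral>x. (\<integral>y. f (x(j:=y)) \<partial>lborel) \<partial>Pi\<^sub>M I (\<lambda>_. lborel))"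
  proof -
    have I_insert: "{..<m} = insert j I" using j unfolding I_def by auto
    have "integrable (RmMeasure m) f" using int_dens int_h unfolding f_def by simp
    then show ?thesis
      unfolding RmMeasure_def I_insert by (intro product_integral_insert) (auto simp: I_def)
  qed
  moreover have "0 \<le> (\<integral>y. f (x(j:=y)) \<partial>lborel)" for x
  proof -
    have "f (x(j:=y)) = beta_dens_without m s j x
        * (K * particle_weight s x I y - h y * particle_weight s x I y)" for y
      unfolding f_def beta_dens_fun_upd[OF j] I_def by (simp add: algebra_simps)
    then have "(\<integral>y. f (x(j:=y)) \<partial>lborel) = beta_dens_without m s j x
        * (K * (\<integral>y. particle_weight s x I y \<partial>lborel) - (\<integral>y. h y * particle_weight s x I y \<partial>lborel))"
      using integrable_particle_weight[OF s] h_int[of x] unfolding I_def by simp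
    then show ?thesis
      using cond_le[of x] beta_dens_without_nonneg[of m s j x] unfolding I_def by simp
  qed
  ultimately have "0 \<le> (\<integral>l. f l \<partial>RmMeasure m)"
    by (simp add: integral_nonneg_AE)
  then show ?thesis
    using int_dens int_h unfolding f_def beta_Z_def by simp
qed

lemma beta_Z_pos:
  assumes s: "0 \<le> s" and m: "1 \<le> m"
  shows "0 < beta_Z m s"
proof -
  interpret product_sigma_finite "\<lambda>_::nat. lborel :: real measure" by standard
  define S where "S = (\<Pi>\<^sub>E k\<in>{..<m}. {real (3*k)..real (3*k) + 1})"
  define c where "c = exp (-(1/2) * (\<Sum>k<m. (real (3*k) + 1)^2))"
  have S: "S \<in> sets (RmMeasure m)" "emeasure (RmMeasure m) S = 1"
    unfolding S_def RmMeasure_def by (auto intro!: sets_PiM_I_finite simp: emeasure_PiM)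
  have c_le: "c \<le> beta_dens m s l" if l: "l \<in> S" for l
  proof -
    have l_bounds: "real (3*k) \<le> l k \<and> l k \<le> real (3*k) + 1" if "k < m" for k
      using l that unfolding S_def by (auto simp: PiE_iff)
    then have "(\<Sum>k<m. (l k)^2) \<le> (\<Sum>k<m. (real (3*k) + 1)^2)"
      by (intro sum_mono power_mono) force+
    then have "c \<le> exp (-(1/2) * (\<Sum>k<m. (l k)^2))" unfolding c_def by simp
    moreover have "1 \<le> (\<Prod>i<m. \<Prod>j\<in>{i<..<m}. abspow (l i - l j) s)"
    proof (intro prod_ge_1 ballI)
      fix i j assume "i \<in> {..<m}" "j \<in> {i<..<m}"
      then have "1 \<le> \<bar>l i - l j\<bar>" using l_bounds[of i] l_bounds[of j] by auto
      then show "1 \<le> abspow (l i - l j) s" using powr_le_abspow[OF s, of 1] by simp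
    qed
    ultimately show ?thesis
      unfolding beta_dens_def using mult_mono[of c _ 1] by (simp add: c_def)
  qed
  have "0 < c" unfolding c_def by simp
  also have "c = (\<integral>l. indicator S l * c \<partial>RmMeasure m)"
    using S by (simp add: measure_def)
  also have "\<dots> \<le> (\<integral>l. beta_dens m s l \<partial>RmMeasure m)"
    using S integrable_beta_dens[OF s m] c_le beta_dens_nonneg
    by (intro integral_mono integrable_mult_left integrable_real_indicator)
      (auto simp: indicator_def)
  finally show ?thesis unfolding beta_Z_def .
qed

lemma beta_dens_anticoncentration:
  assumes s: "0 \<le> s" and j: "j < m" and r: "0 < r" "r \<le> 1"
  shows "(\<integral>l. indicator {u-r<..<u+r} (l j) * beta_dens m s l \<partial>RmMeasure m)
    \<le> 2 * r * exp (9/2) * (17 * real m) powr (s * m) * beta_Z m s"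
proof (rule integral_beta_dens_mult_le[OF s j])
  fix a
  show "integrable lborel (\<lambda>y. indicator {u-r<..<u+r} y * particle_weight s a ({..<m}-{j}) y)"
    using integrable_mult_indicator[OF _ integrable_particle_weight[OF s]] by simp
  show "(\<integral>y. indicator {u-r<..<u+r} y * particle_weight s a ({..<m}-{j}) y \<partial>lborel)
      \<le> 2 * r * exp (9/2) * (17 * real m) powr (s * m)
        * (\<integral>y. particle_weight s a ({..<m}-{j}) y \<partial>lborel)"
    using j r by (intro particle_weight_anticoncentration[OF s]) auto
qed (auto simp: indicator_def one_le_power)

lemma beta_dens_second_moment:
  fixes s :: real
  assumes s: "0 \<le> s" and j: "j < m" and sm: "s * m \<le> 1"
  shows "(\<integral>l. (1 + \<bar>l j\<bar>)^2 * beta_dens m s l \<partial>RmMeasure m)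
    \<le> gauss_cubic_moment * exp (1/2) * (17 * real m) powr (s * m) * beta_Z m s"
proof (rule integral_beta_dens_mult_le[OF s j, where h = "\<lambda>y. (1 + \<bar>y\<bar>)^2"])
  fix a
  show "integrable lborel (\<lambda>y. (1 + \<bar>y\<bar>)^2 * particle_weight s a ({..<m}-{j}) y)"
    by (rule integrable_power_mult_particle_weight[OF s]) simp
  show "(\<integral>y. (1 + \<bar>y\<bar>)^2 * particle_weight s a ({..<m}-{j}) y \<partial>lborel)
      \<le> gauss_cubic_moment * exp (1/2) * (17 * real m) powr (s * m)
        * (\<integral>y. particle_weight s a ({..<m}-{j}) y \<partial>lborel)"
    using j sm by (intro particle_weight_second_moment[OF s]) auto
qed auto

section \<open>The logarithmic interaction\<close>

text \<open>With c i = 1 + x i / (a_n b_n) and b = b_n this is the double sum of logarithms in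
  the exponent of the theorem.\<close>
definition log_interaction :: "nat \<Rightarrow> nat \<Rightarrow> (nat \<Rightarrow> real) \<Rightarrow> real \<Rightarrow> (nat \<Rightarrow> real) \<Rightarrow> real" where
  "log_interaction k m c b l = (\<Sum>i<k. \<Sum>j<m. ln \<bar>c i - l j / b\<bar>)"

lemma log_interaction_measurable[measurable]:
  "log_interaction k m c b \<in> borel_measurable (RmMeasure m)"
  unfolding log_interaction_def RmMeasure_def by measurable

lemma powr_le_1_plus_mult_square:
  fixes p y :: real
  assumes "0 \<le> p" "p \<le> 1" "0 \<le> y"
  shows "(1 + y) powr p \<le> 1 + p * (1 + y)^2"
proof -
  define z where "z = p * ln (1 + y)"
  have "0 \<le> z" unfolding z_def using assms by auto
  have "(1 - z) * exp z \<le> exp (-z) * exp z"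
    using exp_ge_add_one_self[of "-z"] by (intro mult_right_mono) auto
  then have "exp z \<le> 1 + z * exp z" by (simp add: exp_minus field_simps)
  moreover have "exp z = (1 + y) powr p" unfolding z_def using assms by (simp add: powr_def)
  moreover have "(1 + y) powr p \<le> (1 + y) powr 1" using assms by (intro powr_mono) auto
  moreover have "z \<le> p * (1 + y)"
    unfolding z_def using assms ln_add_one_self_le_self[of y] by (intro mult_left_mono) auto
  ultimately have "z * exp z \<le> (p * (1 + y)) * (1 + y)"
    using \<open>0 \<le> z\<close> assms by (intro mult_mono) auto
  then show ?thesis using \<open>exp z \<le> 1 + z * exp z\<close> \<open>exp z = (1 + y) powr p\<close>
    by (simp add: power2_eq_square mult_ac)
qed

lemma ln_abs_diff_divide_le:
  fixes c t b M :: real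
  assumes "\<bar>c\<bar> \<le> M" "0 < b" "1 / b \<le> M" "1 \<le> M"
  shows "ln \<bar>c - t / b\<bar> \<le> ln M + ln (1 + \<bar>t\<bar>)"
proof (cases "c - t / b = 0")
  case False
  have "\<bar>c - t / b\<bar> \<le> \<bar>c\<bar> + \<bar>t\<bar> * (1 / b)"
    using assms by (simp add: abs_triangle_ineq4[THEN order.trans])
  also have "\<dots> \<le> M + \<bar>t\<bar> * M" using assms by (intro add_mono mult_left_mono) auto
  also have "\<dots> = M * (1 + \<bar>t\<bar>)" by (simp add: algebra_simps)
  finally have "ln \<bar>c - t / b\<bar> \<le> ln (M * (1 + \<bar>t\<bar>))" using False by (intro ln_mono) auto
  also have "\<dots> = ln M + ln (1 + \<bar>t\<bar>)" using assms by (simp add: ln_mult add_pos_nonneg)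
  finally show ?thesis .
qed (use assms in simp)

text \<open>Jensen's inequality for exp moves the average over j outside, after which each
  factor grows at most quadratically in the corresponding coordinate.\<close>
lemma exp_log_interaction_le:
  fixes s b :: real and k m :: nat and c :: "nat \<Rightarrow> real"
  assumes s: "0 \<le> s" and m: "1 \<le> m" and b: "0 < b" and skm: "s * k * m \<le> 1"
  defines "M \<equiv> 1 + (\<Sum>i<k. \<bar>c i\<bar>) + 1 / b"
  shows "exp (s * log_interaction k m c b l)
    \<le> M powr (s * k * m) * (1 + s * k * (\<Sum>j<m. (1 + \<bar>l j\<bar>)^2))"
proof -
  define p where "p = s * k * m"
  define L where "L j = ln (1 + \<bar>l j\<bar>)" for j
  have "0 \<le> p" "p \<le> 1" using s skm unfolding p_def by auto
  have "0 \<le> (\<Sum>i<k. \<bar>c i\<bar>)" by (intro sum_nonneg) auto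
  then have "1 \<le> M" "1 / b \<le> M" unfolding M_def using b by auto
  have "\<bar>c i\<bar> \<le> M" if "i < k" for i
  proof -
    have "\<bar>c i\<bar> \<le> (\<Sum>i<k. \<bar>c i\<bar>)" using that by (intro member_le_sum) auto
    then show ?thesis using b unfolding M_def by (smt (verit) divide_pos_pos)
  qed
  then have "ln \<bar>c i - l j / b\<bar> \<le> ln M + L j" if "i < k" for i j
    using ln_abs_diff_divide_le b \<open>1 \<le> M\<close> \<open>1 / b \<le> M\<close> that unfolding L_def by blast
  then have "s * log_interaction k m c b l \<le> s * (\<Sum>i<k. \<Sum>j<m. ln M + L j)"
    unfolding log_interaction_def using s by (intro mult_left_mono sum_mono) auto
  also have "\<dots> = p * ln M + (\<Sum>j<m. (1 / real m) *\<^sub>R (p * L j))"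
    unfolding p_def using m by (simp add: sum.distrib sum_distrib_left algebra_simps)
  finally have "exp (s * log_interaction k m c b l)
      \<le> M powr p * exp (\<Sum>j<m. (1 / real m) *\<^sub>R (p * L j))"
    using \<open>1 \<le> M\<close> by (simp add: exp_add[symmetric] powr_def mult_ac)
  also have "exp (\<Sum>j<m. (1 / real m) *\<^sub>R (p * L j)) \<le> (\<Sum>j<m. (1 / real m) * exp (p * L j))"
    using m by (intro convex_on_sum[OF _ _ exp_convex]) (auto simp: lessThan_empty_iff)
  also have "\<dots> \<le> (\<Sum>j<m. (1 / real m) * (1 + p * (1 + \<bar>l j\<bar>)^2))"
    using powr_le_1_plus_mult_square[OF \<open>0 \<le> p\<close> \<open>p \<le> 1\<close>]
    unfolding L_def by (intro sum_mono mult_left_mono) (auto simp: powr_def add_pos_nonneg)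
  also have "\<dots> = 1 + s * k * (\<Sum>j<m. (1 + \<bar>l j\<bar>)^2)"
  proof -
    have "(\<Sum>j<m. (1 / real m) * (1 + p * (1 + \<bar>l j\<bar>)^2))
        = (\<Sum>j<m. 1 / real m) + (\<Sum>j<m. s * k * (1 + \<bar>l j\<bar>)^2)"
      unfolding sum.distrib[symmetric] using m by (intro sum.cong refl) (simp add: p_def field_simps)
    then show ?thesis using m by (simp add: sum_distrib_left)
  qed
  finally show ?thesis using \<open>1 \<le> M\<close> unfolding p_def by (simp add: mult_left_mono)
qed

lemma integrable_sum_moments_beta_dens:
  assumes "0 \<le> s"
  shows "integrable (RmMeasure m) (\<lambda>l. (\<Sum>j<m. (1 + \<bar>l j\<bar>)^2) * beta_dens m s l)"
  unfolding sum_distrib_right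
  by (intro Bochner_Integration.integrable_sum integrable_beta_dens_mult[OF assms]) auto

lemma integral_sum_moments_beta_dens_le:
  fixes s :: real
  assumes "0 \<le> s" "s * m \<le> 1"
  shows "(\<integral>l. (\<Sum>j<m. (1 + \<bar>l j\<bar>)^2) * beta_dens m s l \<partial>RmMeasure m)
    \<le> m * (gauss_cubic_moment * exp (1/2) * (17 * real m) powr (s * m)) * beta_Z m s"
proof -
  have "(\<integral>l. (\<Sum>j<m. (1 + \<bar>l j\<bar>)^2) * beta_dens m s l \<partial>RmMeasure m)
      = (\<Sum>j<m. \<integral>l. (1 + \<bar>l j\<bar>)^2 * beta_dens m s l \<partial>RmMeasure m)"
    unfolding sum_distrib_right
    by (intro Bochner_Integration.integral_sum integrable_beta_dens_mult[OF assms(1)]) auto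
  also have "\<dots> \<le> (\<Sum>j<m. gauss_cubic_moment * exp (1/2) * (17 * real m) powr (s * m) * beta_Z m s)"
    using beta_dens_second_moment[OF assms(1) _ assms(2)] by (intro sum_mono) auto
  finally show ?thesis by simp
qed

lemma integrable_exp_log_interaction:
  fixes s b :: real and k m :: nat
  assumes s: "0 \<le> s" and m: "1 \<le> m" and b: "0 < b" and skm: "s * k * m \<le> 1"
  shows "integrable (RmMeasure m) (\<lambda>l. exp (s * log_interaction k m c b l) * beta_dens m s l)"
proof -
  define M where "M = (1 + (\<Sum>i<k. \<bar>c i\<bar>) + 1 / b) powr (s * k * m)"
  have "integrable (RmMeasure m)
      (\<lambda>l. M * beta_dens m s l + M * s * k * ((\<Sum>j<m. (1 + \<bar>l j\<bar>)^2) * beta_dens m s l))"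
    using integrable_beta_dens[OF s m] integrable_sum_moments_beta_dens[OF s] by auto
  then show ?thesis
  proof (rule Bochner_Integration.integrable_bound)
    show "AE l in RmMeasure m. norm (exp (s * log_interaction k m c b l) * beta_dens m s l)
        \<le> norm (M * beta_dens m s l + M * s * k * ((\<Sum>j<m. (1 + \<bar>l j\<bar>)^2) * beta_dens m s l))"
    proof (intro AE_I2)
      fix l
      have "exp (s * log_interaction k m c b l) * beta_dens m s l
          \<le> (M * (1 + s * k * (\<Sum>j<m. (1 + \<bar>l j\<bar>)^2))) * beta_dens m s l"
        using exp_log_interaction_le[OF s m b skm] beta_dens_nonneg unfolding M_def
        by (intro mult_right_mono) auto
      then show "norm (exp (s * log_interaction k m c b l) * beta_dens m s l)
          \<le> norm (M * beta_dens m s l + M * s * k * ((\<Sum>j<m. (1 + \<bar>l j\<bar>)^2) * beta_dens m s l))"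
        using beta_dens_nonneg[of m s l] by (simp add: algebra_simps abs_mult)
    qed
  qed simp
qed

lemma beta_E_exp_log_interaction_le:
  fixes s b :: real and k m :: nat
  assumes s: "0 \<le> s" and m: "1 \<le> m" and b: "0 < b" and skm: "s * k * m \<le> 1" and sm: "s * m \<le> 1"
  shows "beta_E m s (\<lambda>l. exp (s * log_interaction k m c b l))
    \<le> (1 + (\<Sum>i<k. \<bar>c i\<bar>) + 1 / b) powr (s * k * m)
      * (1 + s * k * m * (gauss_cubic_moment * exp (1/2) * (17 * real m) powr (s * m)))"
proof -
  define M where "M = (1 + (\<Sum>i<k. \<bar>c i\<bar>) + 1 / b) powr (s * k * m)"
  define K where "K = gauss_cubic_moment * exp (1/2) * (17 * real m) powr (s * m)"
  define S where "S l = (\<Sum>j<m. (1 + \<bar>l j\<bar>)^2) * beta_dens m s l" for l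
  have int_S: "integrable (RmMeasure m) S"
    unfolding S_def by (rule integrable_sum_moments_beta_dens[OF s])
  have "(\<integral>l. exp (s * log_interaction k m c b l) * beta_dens m s l \<partial>RmMeasure m)
      \<le> (\<integral>l. M * beta_dens m s l + M * s * k * S l \<partial>RmMeasure m)"
  proof (rule integral_mono)
    fix l
    have "exp (s * log_interaction k m c b l) * beta_dens m s l
        \<le> (M * (1 + s * k * (\<Sum>j<m. (1 + \<bar>l j\<bar>)^2))) * beta_dens m s l"
      using exp_log_interaction_le[OF s m b skm] beta_dens_nonneg unfolding M_def
      by (intro mult_right_mono) auto
    then show "exp (s * log_interaction k m c b l) * beta_dens m s l
        \<le> M * beta_dens m s l + M * s * k * S l"
      by (simp add: S_def algebra_simps)
  qed (use integrable_exp_log_interaction[OF s m b skm] integrable_beta_dens[OF s m] int_S in auto)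
  also have "\<dots> = M * beta_Z m s + M * s * k * (\<integral>l. S l \<partial>RmMeasure m)"
    using integrable_beta_dens[OF s m] int_S by (simp add: beta_Z_def)
  also have "\<dots> \<le> M * beta_Z m s + M * s * k * (m * K * beta_Z m s)"
    using integral_sum_moments_beta_dens_le[OF s sm] s unfolding S_def K_def M_def
    by (intro add_left_mono mult_left_mono) auto
  also have "\<dots> = (M * (1 + s * k * m * K)) * beta_Z m s" by (simp add: algebra_simps)
  finally show ?thesis
    using beta_Z_pos[OF s m] unfolding beta_E_def M_def K_def by (simp add: divide_le_eq)
qed

text \<open>Away from the r-neighbourhoods of the points b * c i every logarithm is at least
  ln (r / b); the indicator sum makes the bound trivial elsewhere.\<close>
lemma exp_log_interaction_ge:
  fixes s b r :: real and k m :: nat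
  assumes s: "0 \<le> s" and b: "0 < b" and r: "0 < r"
  shows "(r / b) powr (s * k * m) * (1 - (\<Sum>i<k. \<Sum>j<m. indicator {b * c i - r<..<b * c i + r} (l j)))
    \<le> exp (s * log_interaction k m c b l)"
proof (cases "\<exists>i<k. \<exists>j<m. l j \<in> {b * c i - r<..<b * c i + r}")
  case True
  then obtain i j where ij: "i < k" "j < m" "l j \<in> {b * c i - r<..<b * c i + r}" by blast
  have "(1::real) \<le> (\<Sum>j<m. indicator {b * c i - r<..<b * c i + r} (l j))"
    using ij member_le_sum[of j "{..<m}" "\<lambda>j. indicator {b * c i - r<..<b * c i + r} (l j) :: real"]
    by auto
  also have "\<dots> \<le> (\<Sum>i<k. \<Sum>j<m. indicator {b * c i - r<..<b * c i + r} (l j))"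
    using ij by (intro member_le_sum) (auto intro: sum_nonneg)
  finally have "(r / b) powr (s * k * m)
      * (1 - (\<Sum>i<k. \<Sum>j<m. indicator {b * c i - r<..<b * c i + r} (l j))) \<le> 0"
    by (intro mult_nonneg_nonpos) auto
  then show ?thesis by (rule order.trans) simp
next
  case False
  then have no_hits: "(\<Sum>i<k. \<Sum>j<m. indicator {b * c i - r<..<b * c i + r} (l j) :: real) = 0"
    by (intro sum.neutral ballI) (auto simp: indicator_def)
  have "ln (r / b) \<le> ln \<bar>c i - l j / b\<bar>" if "i < k" "j < m" for i j
  proof -
    have "\<not> (b * c i - r < l j \<and> l j < b * c i + r)" using False that by auto
    then have "r \<le> \<bar>b * c i - l j\<bar>" by (auto simp: abs_if)
    also have "b * c i - l j = b * (c i - l j / b)" using b by (simp add: field_simps)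
    then have "\<bar>b * c i - l j\<bar> = b * \<bar>c i - l j / b\<bar>" using b by (simp add: abs_mult)
    finally show ?thesis using r b by (intro ln_mono) (auto simp: divide_le_eq mult.commute)
  qed
  then have "s * (\<Sum>i<k. \<Sum>j<m. ln (r / b)) \<le> s * log_interaction k m c b l"
    unfolding log_interaction_def using s by (intro mult_left_mono sum_mono) auto
  then show ?thesis using r b by (simp add: no_hits powr_def mult_ac)
qed

lemma beta_E_nonneg: "(\<And>l. 0 \<le> f l) \<Longrightarrow> 0 \<le> beta_E m s f"
  unfolding beta_E_def beta_Z_def
  by (intro divide_nonneg_nonneg integral_nonneg_AE AE_I2 mult_nonneg_nonneg beta_dens_nonneg)

lemma beta_E_exp_log_interaction_ge:
  fixes s b r :: real and k m :: nat
  assumes s: "0 \<le> s" and m: "1 \<le> m" and b: "0 < b" and skm: "s * k * m \<le> 1"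
    and r: "0 < r" "r \<le> 1"
  shows "(r / b) powr (s * k * m) * (1 - k * m * (2 * r * exp (9/2) * (17 * real m) powr (s * m)))
    \<le> beta_E m s (\<lambda>l. exp (s * log_interaction k m c b l))"
proof -
  define K where "K = 2 * r * exp (9/2) * (17 * real m) powr (s * m)"
  define \<rho> where "\<rho> = (r / b) powr (s * k * m)"
  define I where "I i j l = indicator {b * c i - r<..<b * c i + r} (l j) * beta_dens m s l" for i j l
  have int_I: "integrable (RmMeasure m) (I i j)" if "j < m" for i j
    unfolding I_def by (rule integrable_beta_dens_mult[OF s that]) (auto simp: indicator_def one_le_power)
  have int_dens: "integrable (RmMeasure m) (beta_dens m s)" by (rule integrable_beta_dens[OF s m])
  have "\<rho> * (1 - k * m * K) * beta_Z m s = \<rho> * (beta_Z m s - (\<Sum>i<k. \<Sum>j<m. K * beta_Z m s))"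
    by (simp add: algebra_simps)
  also have "\<dots> \<le> \<rho> * (beta_Z m s - (\<Sum>i<k. \<Sum>j<m. (\<integral>l. I i j l \<partial>RmMeasure m)))"
    unfolding \<rho>_def I_def K_def
    using beta_dens_anticoncentration[OF s _ r] by (intro mult_left_mono diff_left_mono sum_mono) auto
  also have "\<dots> = (\<integral>l. \<rho> * (beta_dens m s l - (\<Sum>i<k. \<Sum>j<m. I i j l)) \<partial>RmMeasure m)"
  proof -
    have "(\<integral>l. (\<Sum>i<k. \<Sum>j<m. I i j l) \<partial>RmMeasure m)
        = (\<Sum>i<k. (\<integral>l. (\<Sum>j<m. I i j l) \<partial>RmMeasure m))"
      using int_I by (intro Bochner_Integration.integral_sum Bochner_Integration.integrable_sum) auto
    also have "\<dots> = (\<Sum>i<k. \<Sum>j<m. (\<integral>l. I i j l \<partial>RmMeasure m))"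
      using int_I by (intro sum.cong refl Bochner_Integration.integral_sum) auto
    finally have "(\<integral>l. (\<Sum>i<k. \<Sum>j<m. I i j l) \<partial>RmMeasure m)
        = (\<Sum>i<k. \<Sum>j<m. (\<integral>l. I i j l \<partial>RmMeasure m))" .
    moreover have "integrable (RmMeasure m) (\<lambda>l. \<Sum>i<k. \<Sum>j<m. I i j l)"
      using int_I by (intro Bochner_Integration.integrable_sum) auto
    ultimately show ?thesis using int_dens by (simp add: beta_Z_def)
  qed
  also have "\<dots> \<le> (\<integral>l. exp (s * log_interaction k m c b l) * beta_dens m s l \<partial>RmMeasure m)"
  proof (rule integral_mono)
    fix l
    have "\<rho> * (beta_dens m s l - (\<Sum>i<k. \<Sum>j<m. I i j l))
        = \<rho> * (1 - (\<Sum>i<k. \<Sum>j<m. indicator {b * c i - r<..<b * c i + r} (l j))) * beta_dens m s l"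
    proof -
      have "(\<Sum>i<k. \<Sum>j<m. I i j l)
          = (\<Sum>i<k. \<Sum>j<m. indicator {b * c i - r<..<b * c i + r} (l j)) * beta_dens m s l"
        unfolding I_def by (simp only: sum_distrib_right)
      then show ?thesis by (simp only: right_diff_distrib left_diff_distrib mult_ac mult_1)
    qed
    also have "\<dots> \<le> exp (s * log_interaction k m c b l) * beta_dens m s l"
      unfolding \<rho>_def using exp_log_interaction_ge[OF s b r(1)] beta_dens_nonneg
      by (intro mult_right_mono) auto
    finally show "\<rho> * (beta_dens m s l - (\<Sum>i<k. \<Sum>j<m. I i j l))
        \<le> exp (s * log_interaction k m c b l) * beta_dens m s l" .
  qed (use int_I int_dens integrable_exp_log_interaction[OF s m b skm] in
      \<open>auto intro!: Bochner_Integration.integrable_sum\<close>)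
  finally show ?thesis
    using beta_Z_pos[OF s m] unfolding beta_E_def \<rho>_def K_def by (simp add: le_divide_eq)
qed

section \<open>Asymptotics\<close>

lemma centering_bounds:
  fixes L d :: real
  assumes L: "0 < L" "0 \<le> ln L" "ln L + ln (4 * pi) \<le> L / 4" and d: "\<bar>ln d\<bar> \<le> L / 8"
  defines "T \<equiv> sqrt (2 * L)"
  shows "7/8 * T \<le> T - (ln L + 2 * ln d + ln (4 * pi)) / (2 * T)"
    and "T - (ln L + 2 * ln d + ln (4 * pi)) / (2 * T) \<le> 9/8 * T"
proof -
  define N where "N = ln L + 2 * ln d + ln (4 * pi)"
  have "0 < T" "T * T = 2 * L" unfolding T_def using L by auto
  have "0 \<le> ln (4 * pi)" using pi_gt3 by simp
  then have "\<bar>N\<bar> \<le> T * T / 4" unfolding N_def \<open>T * T = 2 * L\<close> using L d by linarith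
  then have "\<bar>N\<bar> / (2 * T) \<le> (T * T / 4) / (2 * T)" using \<open>0 < T\<close> by (intro divide_right_mono) auto
  also have "\<dots> = T / 8" using \<open>0 < T\<close> by (simp add: field_simps)
  finally have "\<bar>N / (2 * T)\<bar> \<le> T / 8" using \<open>0 < T\<close> by (simp add: abs_divide)
  then show "7/8 * T \<le> T - N / (2 * T)" and "T - N / (2 * T) \<le> 9/8 * T" by linarith+
qed

lemma centering_eventually_bounds:
  fixes \<delta> a b :: "nat \<Rightarrow> real"
  assumes \<delta>_pos: "\<And>n. \<delta> n > 0"
    and \<delta>_lim: "(\<lambda>n. ln (\<delta> n) / ln (real n)) \<longlonglongrightarrow> 0"
    and a_def: "\<And>n. a n = \<delta> n * sqrt (2 * ln (real n))"
    and b_def: "\<And>n. b n = sqrt (2 * ln (real n)) -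
        (ln (ln (real n)) + 2 * ln (\<delta> n) + ln (4 * pi)) / (2 * sqrt (2 * ln (real n)))"
  shows "\<forall>\<^sub>F n in sequentially. 1 \<le> b n \<and> b n \<le> real n \<and> 1 / real n \<le> a n * b n"
proof -
  have "\<forall>\<^sub>F n in sequentially. \<bar>ln (\<delta> n) / ln (real n)\<bar> < 1/8"
    using tendstoD[OF \<delta>_lim, of "1/8"] by simp
  moreover have "\<forall>\<^sub>F n in sequentially. ln (ln (real n)) + ln (4 * pi) \<le> ln (real n) / 4"
    by real_asymp
  moreover have "\<forall>\<^sub>F n in sequentially. 0 \<le> ln (ln (real n))" by real_asymp
  moreover have "\<forall>\<^sub>F n in sequentially. 1 \<le> 7/8 * sqrt (2 * ln (real n))" by real_asymp
  moreover have "\<forall>\<^sub>F n in sequentially. 9/8 * sqrt (2 * ln (real n)) \<le> real n" by real_asymp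
  moreover have "\<forall>\<^sub>F n in sequentially. 2 \<le> n" by (rule eventually_ge_at_top)
  ultimately show ?thesis
  proof eventually_elim
    case (elim n)
    define T where "T = sqrt (2 * ln (real n))"
    have "0 < ln (real n)" using elim(6) by simp
    then have ln_\<delta>: "\<bar>ln (\<delta> n)\<bar> \<le> ln (real n) / 8"
      using elim(1) by (simp add: abs_divide field_simps)
    note b_bounds = centering_bounds[OF \<open>0 < ln (real n)\<close> elim(3,2) ln_\<delta>]
    have "1 \<le> b n" "b n \<le> real n"
      using b_bounds elim(4,5) unfolding b_def by linarith+
    moreover have "1 / real n \<le> \<delta> n"
    proof -
      have "- ln (real n) \<le> ln (\<delta> n)" using ln_\<delta> \<open>0 < ln (real n)\<close> by (auto simp: abs_le_iff)
      then have "exp (- ln (real n)) \<le> exp (ln (\<delta> n))" by (rule exp_mono)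
      then have "exp (- ln (real n)) \<le> \<delta> n" using \<delta>_pos[of n] by simp
      then show ?thesis using elim(6) by (simp add: exp_minus inverse_eq_divide)
    qed
    moreover have "\<delta> n \<le> a n * b n"
    proof -
      have "1 \<le> T" using elim(4) unfolding T_def by linarith
      then have "\<delta> n * 1 * 1 \<le> \<delta> n * T * b n"
        using \<delta>_pos[of n] \<open>1 \<le> b n\<close> by (intro mult_mono) auto
      then show ?thesis unfolding a_def T_def by simp
    qed
    ultimately show ?case by simp
  qed
qed

lemma beta_E_exp_log_interaction_le_explicit:
  fixes n k :: nat and s a b :: real and x :: "nat \<Rightarrow> real"
  assumes n: "k < n" and s: "0 \<le> s" "s * k * n \<le> 1" "s * n \<le> 1"
    and b: "1 \<le> b" and ab: "1 / real n \<le> a * b"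
  shows "beta_E (n - k) s (\<lambda>l. exp (s * log_interaction k (n - k) (\<lambda>i. 1 + x i / (a * b)) b l))
    \<le> ((2 + real k + (\<Sum>i<k. \<bar>x i\<bar>)) * real n) powr (k * (n * s))
      * (1 + k * (n * s) * (gauss_cubic_moment * exp (1/2) * (17 * real n) powr (n * s)))"
proof -
  define m where "m = n - k"
  define X where "X = (\<Sum>i<k. \<bar>x i\<bar>)"
  define M where "M = 1 + (\<Sum>i<k. \<bar>1 + x i / (a * b)\<bar>) + 1 / b"
  have "1 \<le> m" "real m \<le> real n" "1 \<le> real n" using n by (auto simp: m_def)
  have "0 < 1 / real n" using \<open>1 \<le> real n\<close> by simp
  then have "0 < a * b" using ab by linarith
  have x_le: "\<bar>1 + x i / (a * b)\<bar> \<le> 1 + \<bar>x i\<bar> * real n" for i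
  proof -
    have "\<bar>x i\<bar> / (a * b) \<le> \<bar>x i\<bar> / (1 / real n)"
      using ab \<open>0 < a * b\<close> \<open>1 \<le> real n\<close> by (intro divide_left_mono) auto
    then show ?thesis using \<open>0 < a * b\<close> by (simp add: abs_divide abs_triangle_ineq[THEN order.trans])
  qed
  have "1 \<le> M" unfolding M_def using b by (auto intro!: add_nonneg_nonneg sum_nonneg)
  have "M \<le> (2 + real k + X) * real n"
  proof -
    have "(\<Sum>i<k. \<bar>1 + x i / (a * b)\<bar>) \<le> real k + X * real n"
      using sum_mono[of "{..<k}", OF x_le] by (simp add: X_def sum.distrib sum_distrib_right)
    moreover have "1 / b \<le> 1" using b by simp
    ultimately have "M \<le> 2 + real k + X * real n" unfolding M_def by linarith
    also have "\<dots> \<le> (2 + real k) * real n + X * real n"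
      using mult_left_mono[OF \<open>1 \<le> real n\<close>, of "2 + real k"] by simp
    finally show ?thesis by (simp add: distrib_right)
  qed
  have skm: "s * k * m \<le> s * k * n" using \<open>real m \<le> real n\<close> s by (intro mult_left_mono) auto
  have sm: "s * m \<le> s * n" using \<open>real m \<le> real n\<close> s by (intro mult_left_mono) auto
  have "beta_E m s (\<lambda>l. exp (s * log_interaction k m (\<lambda>i. 1 + x i / (a * b)) b l))
      \<le> M powr (s * k * m) * (1 + s * k * m * (gauss_cubic_moment * exp (1/2) * (17 * real m) powr (s * m)))"
    unfolding M_def using b skm sm s \<open>1 \<le> m\<close>
    by (intro beta_E_exp_log_interaction_le) auto
  also have "\<dots> \<le> ((2 + real k + X) * real n) powr (k * (n * s))
      * (1 + k * (n * s) * (gauss_cubic_moment * exp (1/2) * (17 * real n) powr (n * s)))"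
  proof (rule mult_mono)
    show "M powr (s * k * m) \<le> ((2 + real k + X) * real n) powr (k * (n * s))"
      using \<open>1 \<le> M\<close> \<open>M \<le> _\<close> skm s by (intro powr_mono_both) (auto simp: mult_ac)
    have "(17 * real m) powr (s * m) \<le> (17 * real n) powr (n * s)"
      using \<open>1 \<le> m\<close> \<open>real m \<le> real n\<close> sm s by (intro powr_mono_both) (auto simp: mult_ac)
    then have "s * k * m * (gauss_cubic_moment * exp (1/2) * (17 * real m) powr (s * m))
        \<le> k * (n * s) * (gauss_cubic_moment * exp (1/2) * (17 * real n) powr (n * s))"
      using skm s gauss_cubic_moment_nonneg
      by (intro mult_mono[of "s * k * m"] mult_left_mono) (auto simp: mult_ac)
    then show "1 + s * k * m * (gauss_cubic_moment * exp (1/2) * (17 * real m) powr (s * m))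
        \<le> 1 + k * (n * s) * (gauss_cubic_moment * exp (1/2) * (17 * real n) powr (n * s))"
      by simp
  qed (use s gauss_cubic_moment_nonneg in auto)
  finally show ?thesis unfolding m_def X_def .
qed

lemma beta_E_exp_log_interaction_ge_explicit:
  fixes n k :: nat and s b :: real and c :: "nat \<Rightarrow> real"
  assumes n: "k < n" and s: "0 \<le> s" "s * k * n \<le> 1" and b: "1 \<le> b" "b \<le> real n"
  shows "real n powr (- 3 * (k * (n * s))) * (1 - 2 * real k * exp (9/2) * (17 * real n) powr (n * s) / real n)
    \<le> beta_E (n - k) s (\<lambda>l. exp (s * log_interaction k (n - k) c b l))"
proof -
  define m where "m = n - k"
  define r :: real where "r = 1 / (real n)^2"
  define E where "E = beta_E m s (\<lambda>l. exp (s * log_interaction k m c b l))"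
  have "1 \<le> m" "real m \<le> real n" "1 \<le> real n" using n by (auto simp: m_def)
  have "0 < r" "r \<le> 1" unfolding r_def using \<open>1 \<le> real n\<close> by (auto simp: field_simps one_le_power)
  have skm: "s * k * m \<le> s * k * n" using \<open>real m \<le> real n\<close> s by (intro mult_left_mono) auto
  have "real n powr (- 3) = 1 / real n ^ 3"
    using \<open>1 \<le> real n\<close> by (simp add: powr_minus_divide powr_numeral)
  then have "real n powr (- 3 * (k * (n * s))) = (1 / real n ^ 3) powr (s * k * n)"
    by (metis powr_powr mult.assoc mult.commute)
  also have "\<dots> \<le> (r / b) powr (s * k * m)"
  proof (rule powr_mono_both')
    have "1 / real n ^ 3 = r / real n" unfolding r_def by (simp add: power_numeral_reduce power2_eq_square)
    also have "\<dots> \<le> r / b" using b \<open>0 < r\<close> by (intro divide_left_mono) auto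
    finally show "1 / real n ^ 3 \<le> r / b" .
    show "r / b \<le> 1" using b \<open>r \<le> 1\<close> by (simp add: divide_le_eq)
  qed (use skm s \<open>1 \<le> real n\<close> in auto)
  finally have \<rho>: "real n powr (- 3 * (k * (n * s))) \<le> (r / b) powr (s * k * m)" .
  have "k * m * (2 * r * exp (9/2) * (17 * real m) powr (s * m))
      \<le> 2 * real k * exp (9/2) * (17 * real n) powr (n * s) / real n"
  proof -
    have "real m * r \<le> 1 / real n"
      unfolding r_def using \<open>real m \<le> real n\<close> \<open>1 \<le> real n\<close> by (simp add: field_simps power2_eq_square)
    moreover have "(17 * real m) powr (s * m) \<le> (17 * real n) powr (n * s)"
      using \<open>1 \<le> m\<close> \<open>real m \<le> real n\<close> s
      by (intro powr_mono_both) (auto simp: mult_ac intro: mult_left_mono)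
    ultimately have "(real m * r) * (17 * real m) powr (s * m) \<le> (1 / real n) * (17 * real n) powr (n * s)"
      using \<open>0 < r\<close> by (intro mult_mono) auto
    then have "2 * real k * exp (9/2) * ((real m * r) * (17 * real m) powr (s * m))
        \<le> 2 * real k * exp (9/2) * ((1 / real n) * (17 * real n) powr (n * s))"
      by (rule mult_left_mono) simp
    then show ?thesis by (simp add: mult_ac)
  qed
  note q_le = this
  have E_ge: "(r / b) powr (s * k * m) * (1 - k * m * (2 * r * exp (9/2) * (17 * real m) powr (s * m)))
      \<le> E"
    unfolding E_def using s skm b \<open>1 \<le> m\<close> \<open>0 < r\<close> \<open>r \<le> 1\<close>
    by (intro beta_E_exp_log_interaction_ge) auto
  show ?thesis
  proof (cases "0 \<le> 1 - 2 * real k * exp (9/2) * (17 * real n) powr (n * s) / real n")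
    case True
    then have "real n powr (- 3 * (k * (n * s)))
        * (1 - 2 * real k * exp (9/2) * (17 * real n) powr (n * s) / real n)
      \<le> (r / b) powr (s * k * m) * (1 - k * m * (2 * r * exp (9/2) * (17 * real m) powr (s * m)))"
      using \<rho> q_le by (intro mult_mono) auto
    then show ?thesis using E_ge unfolding E_def m_def by linarith
  next
    case False
    then have "real n powr (- 3 * (k * (n * s)))
        * (1 - 2 * real k * exp (9/2) * (17 * real n) powr (n * s) / real n) \<le> 0"
      by (intro mult_nonneg_nonpos) auto
    also have "0 \<le> E" unfolding E_def by (intro beta_E_nonneg) simp
    finally show ?thesis unfolding E_def m_def .
  qed
qed

lemma tendsto_mult_real_powr_1:
  fixes p :: "nat \<Rightarrow> real"
  assumes "0 < C" "p \<longlonglongrightarrow> 0" "(\<lambda>n. p n * ln (real n)) \<longlonglongrightarrow> 0"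
  shows "(\<lambda>n. (C * real n) powr p n) \<longlonglongrightarrow> 1"
proof -
  have "(\<lambda>n. exp (p n * ln C + p n * ln (real n))) \<longlonglongrightarrow> exp (0 * ln C + 0)"
    using assms by (intro tendsto_intros)
  moreover have "\<forall>\<^sub>F n in sequentially. exp (p n * ln C + p n * ln (real n)) = (C * real n) powr p n"
    using eventually_gt_at_top[of 0]
    by eventually_elim (use assms in \<open>simp add: powr_def ln_mult distrib_left\<close>)
  ultimately show ?thesis by (simp add: tendsto_cong)
qed

lemma tendsto_zero_if_mult_ln_tendsto_zero:
  fixes p :: "nat \<Rightarrow> real"
  assumes "(\<lambda>n. p n * ln (real n)) \<longlonglongrightarrow> 0"
  shows "p \<longlonglongrightarrow> 0"
proof (rule Lim_transform_eventually)
  have "(\<lambda>n. 1 / ln (real n)) \<longlonglongrightarrow> 0" by real_asymp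
  then show "(\<lambda>n. (p n * ln (real n)) * (1 / ln (real n))) \<longlonglongrightarrow> 0"
    using tendsto_mult[OF assms] by fastforce
  show "\<forall>\<^sub>F n in sequentially. p n * ln (real n) * (1 / ln (real n)) = p n"
    using eventually_ge_at_top[of 2] by eventually_elim simp
qed

lemma tendsto_scaled_powr_1:
  fixes s :: "nat \<Rightarrow> real"
  assumes s: "(\<lambda>n. real n * ln (real n) * s n) \<longlonglongrightarrow> 0" and "0 < C"
  shows "(\<lambda>n. (C * real n) powr (c * (real n * s n))) \<longlonglongrightarrow> 1"
proof (rule tendsto_mult_real_powr_1[OF \<open>0 < C\<close>])
  show "(\<lambda>n. c * (real n * s n) * ln (real n)) \<longlonglongrightarrow> 0"
    using tendsto_mult_left[OF s, of c] by (simp add: mult_ac)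
  then show "(\<lambda>n. c * (real n * s n)) \<longlonglongrightarrow> 0" by (rule tendsto_zero_if_mult_ln_tendsto_zero)
qed

lemma upper_bound_tendsto_1:
  fixes s :: "nat \<Rightarrow> real" and k K :: real
  assumes s: "(\<lambda>n. real n * ln (real n) * s n) \<longlonglongrightarrow> 0" and "0 < C"
  shows "(\<lambda>n. (C * real n) powr (k * (n * s n))
      * (1 + k * (n * s n) * (K * (17 * real n) powr (n * s n)))) \<longlonglongrightarrow> 1"
proof -
  have "(\<lambda>n. k * (real n * s n)) \<longlonglongrightarrow> 0"
    by (rule tendsto_zero_if_mult_ln_tendsto_zero)
      (use tendsto_mult_left[OF s, of k] in \<open>simp add: mult_ac\<close>)
  moreover have "(\<lambda>n. (17 * real n) powr (real n * s n)) \<longlonglongrightarrow> 1"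
    using tendsto_scaled_powr_1[OF s, of 17 1] by simp
  ultimately have "(\<lambda>n. 1 + k * (n * s n) * (K * (17 * real n) powr (n * s n))) \<longlonglongrightarrow> 1 + 0 * (K * 1)"
    by (intro tendsto_add tendsto_const tendsto_mult tendsto_mult_left)
  from tendsto_mult[OF tendsto_scaled_powr_1[OF s \<open>0 < C\<close>] this] show ?thesis by simp
qed

lemma lower_bound_tendsto_1:
  fixes s :: "nat \<Rightarrow> real" and k K :: real
  assumes s: "(\<lambda>n. real n * ln (real n) * s n) \<longlonglongrightarrow> 0"
  shows "(\<lambda>n. real n powr (- 3 * (k * (n * s n)))
      * (1 - K * (17 * real n) powr (n * s n) / real n)) \<longlonglongrightarrow> 1"
proof -
  have "(\<lambda>n. real n powr (- 3 * (k * (n * s n)))) \<longlonglongrightarrow> 1"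
    using tendsto_scaled_powr_1[OF s, of 1 "- 3 * k"] by (simp add: mult.assoc)
  moreover have "(\<lambda>n. K * (17 * real n) powr (n * s n) / real n) \<longlonglongrightarrow> 0"
    using tendsto_mult_left[OF tendsto_scaled_powr_1[OF s, of 17 1], of K]
    by (intro tendsto_divide_0[OF _ filterlim_at_top_imp_at_infinity] filterlim_real_sequentially) simp_all
  ultimately have "(\<lambda>n. real n powr (- 3 * (k * (n * s n)))
      * (1 - K * (17 * real n) powr (n * s n) / real n)) \<longlonglongrightarrow> 1 * (1 - 0)"
    by (intro tendsto_mult tendsto_diff tendsto_const)
  then show ?thesis by simp
qed

theorem lemma3p3:
  fixes \<delta> \<beta> a b :: "nat \<Rightarrow> real" and k :: nat and x :: "nat \<Rightarrow> real"
  assumes \<delta>_pos: "\<And>n. \<delta> n > 0"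
    and \<delta>_lim: "(\<lambda>n. ln (\<delta> n) / ln (real n)) \<longlonglongrightarrow> 0"
    and \<beta>_nonneg: "\<And>n. \<beta> n \<ge> 0"
    and \<beta>_lim: "(\<lambda>n. real n * ln (real n) * \<beta> n) \<longlonglongrightarrow> 0"
    and a_def: "\<And>n. a n = \<delta> n * sqrt (2 * ln (real n))"
    and b_def: "\<And>n. b n = sqrt (2 * ln (real n)) -
        (ln (ln (real n)) + 2 * ln (\<delta> n) + ln (4 * pi)) / (2 * sqrt (2 * ln (real n)))"
    and k_pos: "k \<ge> 1"
  shows "(\<lambda>n. beta_E (n - k) (\<beta> n)
            (\<lambda>l. exp (\<beta> n * (\<Sum>i<k. \<Sum>j<n - k.
               ln \<bar>1 + x i / (a n * b n) - l j / b n\<bar>))))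
         \<longlonglongrightarrow> 1"
proof -
  define E where "E n = beta_E (n - k) (\<beta> n)
    (\<lambda>l. exp (\<beta> n * log_interaction k (n - k) (\<lambda>i. 1 + x i / (a n * b n)) (b n) l))" for n
  define C where "C = 2 + real k + (\<Sum>i<k. \<bar>x i\<bar>)"
  have n\<beta>_lim: "(\<lambda>n. c * (real n * \<beta> n)) \<longlonglongrightarrow> 0" for c
    by (rule tendsto_zero_if_mult_ln_tendsto_zero)
      (use tendsto_mult_left[OF \<beta>_lim, of c] in \<open>simp add: mult_ac\<close>)
  have n\<beta>_small: "\<forall>\<^sub>F n in sequentially. c * (real n * \<beta> n) < 1" for c
    using tendstoD[OF n\<beta>_lim[of c], of 1] by (auto elim: eventually_mono)
  have "\<forall>\<^sub>F n in sequentially.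
      real n powr (- 3 * (k * (n * \<beta> n))) * (1 - 2 * real k * exp (9/2) * (17 * real n) powr (n * \<beta> n) / real n)
        \<le> E n \<and>
      E n \<le> (C * real n) powr (k * (n * \<beta> n))
        * (1 + k * (n * \<beta> n) * (gauss_cubic_moment * exp (1/2) * (17 * real n) powr (n * \<beta> n)))"
    using n\<beta>_small[of k] n\<beta>_small[of 1] centering_eventually_bounds[OF \<delta>_pos \<delta>_lim a_def b_def]
      eventually_gt_at_top[of k]
  proof eventually_elim
    case (elim n)
    then show ?case
      unfolding E_def C_def
      by (intro conjI beta_E_exp_log_interaction_ge_explicit beta_E_exp_log_interaction_le_explicit)
        (use \<beta>_nonneg[of n] in \<open>auto simp: mult_ac\<close>)
  qed
  moreover have "0 < C" unfolding C_def by (simp add: add_pos_nonneg sum_nonneg)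
  ultimately have "E \<longlonglongrightarrow> 1"
    by (intro tendsto_sandwich[OF _ _ lower_bound_tendsto_1[OF \<beta>_lim] upper_bound_tendsto_1[OF \<beta>_lim]])
      (auto elim: eventually_mono)
  then show ?thesis unfolding E_def log_interaction_def .
qed

end
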